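(* Let $|\mathcal X|$ be a prime (identify $\mathcal X$ with the field $\mathbb F_{|\mathcal X|}$), let $(X_1,Y_1),(X_2,Y_2),\dots$ be i.i.d. copies of a pair $(X,Y)$ on $\mathcal X\times\mathcal Y$, and for $k\ge1$ let $n=2^k$, $\mathbf X=X_1^n$, $\mathbf Y=Y_1^n$. Fix $\beta\in(0,1/2)$, and let $\mathcal I_0,\mathcal I_1$, $A$, $B$ and the SSC decoder $\Psi$ be as in the context. Then for every $n=2^k$, $$\Pr\big(\Psi(A\mathbf X,\mathbf Y)\neq\mathbf X\big)\le\frac{|\mathcal X|-1}{\log 2}\,n\,2^{-n^\beta}$$ (logarithm base $|\mathcal X|$), and consequently $\lim_{n\to\infty}\Pr(\Psi(A\mathbf X,\mathbf Y)\neq\mathbf X)=0$.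
   Context: Let $G\equiv\begin{pmatrix}1&0\\1&1\end{pmatrix}^{\otimes k}S_{\mathrm{BR}}$ over $\mathbb F_{|\mathcal X|}$, where $\otimes k$ is the $k$-th Kronecker power and $S_{\mathrm{BR}}$ is the $n\times n$ bit-reversal permutation matrix (sending the index with binary expansion $b_1\cdots b_k$ to the index with expansion $b_k\cdots b_1$). The extended codeword of $x\in\mathcal X^n$ is $c=T(x)\equiv S_{\mathrm{BR}}^{\top}G^{\top}x$ (an invertible linear map), and $\mathbf C=(C_1,\dots,C_n)=T(\mathbf X)$. For random variables $(U,V)$ with $U\in\mathcal X$, the source Bhattacharyya parameter is $Z(U\mid V)\equiv\frac1{|\mathcal X|-1}\sum_{u\neq u'}\sum_v\sqrt{\mu_{UV}(u,v)\mu_{UV}(u',v)}$. Define $\mathcal I_0\equiv\{i:Z(C_i\mid C_1^{i-1},\mathbf Y)\le2^{-n^\beta}\}$, $\mathcal I_1\equiv\{1,\dots,n\}\setminus\mathcal I_0$, $l=|\mathcal I_1|$; the encoder $A$ maps $x$ to the subvector of $T(x)$ on $\mathcal I_1$ (increasing order), and $B$ maps $x$ to the subvector on $\mathcal I_0$. SSC decoder: given $(u,y)\in\mathcal X^l\times\mathcal Y^n$, build $\hat c$ for $i=1,\dots,n$: entries on $\mathcal I_1$ are given by $u$, and for $i\in\mathcal I_0$, $\hat c_i$ is drawn at random according to $\mu_{C_i\mid C_1^{i-1}\mathbf Y}(\cdot\mid\hat c_1^{i-1},y)$ (fixed arbitrary distribution if the condition has probability zero); $\Psi(u,y)=T^{-1}(\hat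 c)$. *)

theory Defs
  imports "HOL-Probability.Probability"
begin

text \<open>Vectors of length n over F_q are functions nat => nat with entries in {..<q}
  at indices < n (0-based) and 0 elsewhere; matrices are functions nat => nat => nat.\<close>

definition vecs :: "nat \<Rightarrow> nat \<Rightarrow> (nat \<Rightarrow> nat) set" where
  "vecs n q = {x. \<forall>i. (i < n \<longrightarrow> x i < q) \<and> (n \<le> i \<longrightarrow> x i = 0)}"

definition matmul :: "nat \<Rightarrow> nat \<Rightarrow> (nat \<Rightarrow> nat \<Rightarrow> nat) \<Rightarrow> (nat \<Rightarrow> nat \<Rightarrow> nat) \<Rightarrow> (nat \<Rightarrow> nat \<Rightarrow> nat)" where
  "matmul q n M N = (\<lambda>i j. if i < n \<and> j < n then (\<Sum>l<n. M i l * N l j) mod q else 0)"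

definition mulvec :: "nat \<Rightarrow> nat \<Rightarrow> (nat \<Rightarrow> nat \<Rightarrow> nat) \<Rightarrow> (nat \<Rightarrow> nat) \<Rightarrow> (nat \<Rightarrow> nat)" where
  "mulvec q n M x = (\<lambda>i. if i < n then (\<Sum>j<n. M i j * x j) mod q else 0)"

definition transp :: "(nat \<Rightarrow> nat \<Rightarrow> nat) \<Rightarrow> (nat \<Rightarrow> nat \<Rightarrow> nat)" where
  "transp M = (\<lambda>i j. M j i)"

text \<open>The kernel F = [[1,0],[1,1]] and its k-th Kronecker power
  (F^{(k+1)} = F \<otimes> F^{(k)}, with (A \<otimes> B)[i,j] = A[i div m, j div m] * B[i mod m, j mod m]).\<close>

definition Fker :: "nat \<Rightarrow> nat \<Rightarrow> nat" where
  "Fker i j = (if i < 2 \<and> j < 2 \<and> j \<le> i then 1 else 0)"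

fun kronpow :: "nat \<Rightarrow> nat \<Rightarrow> nat \<Rightarrow> nat" where
  "kronpow 0 i j = (if i = 0 \<and> j = 0 then 1 else 0)"
| "kronpow (Suc k) i j = Fker (i div 2 ^ k) (j div 2 ^ k) * kronpow k (i mod 2 ^ k) (j mod 2 ^ k)"

definition bitrev :: "nat \<Rightarrow> nat \<Rightarrow> nat" where
  "bitrev k i = (\<Sum>t<k. ((i div 2 ^ t) mod 2) * 2 ^ (k - 1 - t))"

definition S_BR :: "nat \<Rightarrow> nat \<Rightarrow> nat \<Rightarrow> nat" where
  "S_BR k = (\<lambda>i j. if i < 2 ^ k \<and> j < 2 ^ k \<and> j = bitrev k i then 1 else 0)"

definition Gmat :: "nat \<Rightarrow> nat \<Rightarrow> nat \<Rightarrow> nat \<Rightarrow> nat" where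
  "Gmat q k = matmul q (2 ^ k) (kronpow k) (S_BR k)"

definition Tmap :: "nat \<Rightarrow> nat \<Rightarrow> (nat \<Rightarrow> nat) \<Rightarrow> (nat \<Rightarrow> nat)" where
  "Tmap q k x = mulvec q (2 ^ k) (transp (S_BR k)) (mulvec q (2 ^ k) (transp (Gmat q k)) x)"

definition Tinv :: "nat \<Rightarrow> nat \<Rightarrow> (nat \<Rightarrow> nat) \<Rightarrow> (nat \<Rightarrow> nat)" where
  "Tinv q k = inv_into (vecs (2 ^ k) q) (Tmap q k)"

text \<open>Joint law of (X_1^n, Y_1^n): n i.i.d. copies of p; X and Y are extended by 0 / undefined
  outside the index range.\<close>

definition XYn :: "(nat \<times> 'y) pmf \<Rightarrow> nat \<Rightarrow> ((nat \<Rightarrow> nat) \<times> (nat \<Rightarrow> 'y)) pmf" where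
  "XYn p n = map_pmf (\<lambda>f. (\<lambda>i. if i < n then fst (f i) else 0, \<lambda>i. snd (f i)))
      (Pi_pmf {..<n} undefined (\<lambda>_. p))"

definition restr :: "nat \<Rightarrow> (nat \<Rightarrow> nat) \<Rightarrow> (nat \<Rightarrow> nat)" where
  "restr i c = (\<lambda>j. if j < i then c j else 0)"

text \<open>Joint law of (C_i, (C_1^{i-1}, Y)), with 0-based index i (C_1^{i-1} is C restricted to {..<i}).\<close>

definition CiV :: "nat \<Rightarrow> (nat \<times> 'y) pmf \<Rightarrow> nat \<Rightarrow> nat \<Rightarrow> (nat \<times> ((nat \<Rightarrow> nat) \<times> (nat \<Rightarrow> 'y))) pmf" where
  "CiV q p k i = map_pmf (\<lambda>(x, y). let c = Tmap q k x in (c i, (restr i c, y))) (XYn p (2 ^ k))"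

definition Zbhat :: "nat \<Rightarrow> (nat \<times> 'v) pmf \<Rightarrow> real" where
  "Zbhat q M = 1 / (real q - 1) * (\<Sum>u<q. \<Sum>u'\<in>{..<q} - {u}.
       infsum (\<lambda>v. sqrt (pmf M (u, v) * pmf M (u', v))) UNIV)"

definition I0 :: "nat \<Rightarrow> (nat \<times> 'y) pmf \<Rightarrow> nat \<Rightarrow> real \<Rightarrow> nat set" where
  "I0 q p k \<beta> = {i. i < 2 ^ k \<and> Zbhat q (CiV q p k i) \<le> 2 powr (- (real (2 ^ k) powr \<beta>))}"

definition I1 :: "nat \<Rightarrow> (nat \<times> 'y) pmf \<Rightarrow> nat \<Rightarrow> real \<Rightarrow> nat set" where
  "I1 q p k \<beta> = {..<2 ^ k} - I0 q p k \<beta>"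

definition encA :: "nat \<Rightarrow> (nat \<times> 'y) pmf \<Rightarrow> nat \<Rightarrow> real \<Rightarrow> (nat \<Rightarrow> nat) \<Rightarrow> nat list" where
  "encA q p k \<beta> x = map (Tmap q k x) (sorted_list_of_set (I1 q p k \<beta>))"

definition condC :: "nat \<Rightarrow> (nat \<times> 'y) pmf \<Rightarrow> nat \<Rightarrow> nat pmf \<Rightarrow> nat \<Rightarrow> (nat \<Rightarrow> nat) \<Rightarrow> (nat \<Rightarrow> 'y) \<Rightarrow> nat pmf" where
  "condC q p k d i c y =
     (let J = CiV q p k i; E = {z. snd z = (restr i c, y)} in
      if measure_pmf.prob J E = 0 then d else map_pmf fst (cond_pmf J E))"

fun sscdec :: "nat \<Rightarrow> (nat \<times> 'y) pmf \<Rightarrow> nat \<Rightarrow> real \<Rightarrow> nat pmf \<Rightarrow> nat list \<Rightarrow> (nat \<Rightarrow> 'y) \<Rightarrow> nat \<Rightarrow> (nat \<Rightarrow> nat) pmf" where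
  "sscdec q p k \<beta> d u y 0 = return_pmf (\<lambda>_. 0)"
| "sscdec q p k \<beta> d u y (Suc i) =
     bind_pmf (sscdec q p k \<beta> d u y i) (\<lambda>c.
       map_pmf (\<lambda>ci. c(i := ci))
         (if i \<in> I1 q p k \<beta> then return_pmf (u ! card {j \<in> I1 q p k \<beta>. j < i})
          else condC q p k d i c y))"

definition Psi :: "nat \<Rightarrow> (nat \<times> 'y) pmf \<Rightarrow> nat \<Rightarrow> real \<Rightarrow> nat pmf \<Rightarrow> nat list \<Rightarrow> (nat \<Rightarrow> 'y) \<Rightarrow> (nat \<Rightarrow> nat) pmf" where
  "Psi q p k \<beta> d u y = map_pmf (Tinv q k) (sscdec q p k \<beta> d u y (2 ^ k))"

definition Perr :: "nat \<Rightarrow> (nat \<times> 'y) pmf \<Rightarrow> nat \<Rightarrow> real \<Rightarrow> nat pmf \<Rightarrow> real" where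
  "Perr q p k \<beta> d = measure_pmf.prob
     (bind_pmf (XYn p (2 ^ k)) (\<lambda>(x, y).
        map_pmf (\<lambda>xh. (x, xh)) (Psi q p k \<beta> d (encA q p k \<beta> x) y)))
     {(x, xh). xh \<noteq> x}"

end

theory Submission
  imports Defs "HOL-Real_Asymp.Real_Asymp"
begin

(* The Kronecker power of [[1,0],[1,1]] is unit lower triangular, so by back substitution the
   transform T (a transposed and bit-reversed version of it) is injective. Hence the decoder fails
   only if at some frozen position i in I0 it samples C_i wrongly while all earlier coordinates are
   correct, and by the union bound the block error is at most the sum of these stepwise errors.
   A stepwise error is the error of drawing C_i from its own posterior given (C_1^(i-1), Y), namely
     sum_v sum_(u <> u') mu(u,v) mu(u',v) / mu(v) <= sum_v sum_(u <> u') sqrt (mu(u,v) mu(u',v))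
                                                   = (|X| - 1) Z(C_i | C_1^(i-1), Y)
   because mu(u,v), mu(u',v) <= mu(v); on I0 this is at most (|X| - 1) 2^(-n^beta). *)

section \<open>Injectivity of the transform\<close>

lemma bitrev_Suc: "bitrev (Suc k) i = (i mod 2) * 2 ^ k + bitrev k (i div 2)"
proof -
  have "bitrev (Suc k) i = (\<Sum>t<k. ((i div 2 ^ Suc t) mod 2) * 2 ^ (k - 1 - t)) + (i mod 2) * 2 ^ k"
    unfolding bitrev_def by (subst sum.lessThan_Suc_shift) simp
  also have "(\<Sum>t<k. ((i div 2 ^ Suc t) mod 2) * 2 ^ (k - 1 - t)) = bitrev k (i div 2)"
    unfolding bitrev_def by (intro sum.cong) (auto simp: div_mult2_eq)
  finally show ?thesis by simp
qed

lemma bitrev_less: "bitrev k i < 2 ^ k"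
proof (induction k arbitrary: i)
  case 0
  then show ?case by (simp add: bitrev_def)
next
  case (Suc k)
  have "(i mod 2) * 2 ^ k \<le> 2 ^ k" by simp
  with Suc[of "i div 2"] show ?case unfolding bitrev_Suc power_Suc by linarith
qed

lemma inj_on_bitrev: "inj_on (bitrev k) {..<2 ^ k}"
proof (induction k)
  case 0
  then show ?case by (simp add: inj_on_def)
next
  case (Suc k)
  show ?case
  proof (rule inj_onI)
    fix i j assume ij: "i \<in> {..<2 ^ Suc k}" "j \<in> {..<2 ^ Suc k}" and eq: "bitrev (Suc k) i = bitrev (Suc k) j"
    have split: "(a * 2 ^ k + bitrev k m) div 2 ^ k = a" "(a * 2 ^ k + bitrev k m) mod 2 ^ k = bitrev k m"
      for a m :: nat
      using bitrev_less[of k m] by simp_all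
    have "i mod 2 = j mod 2" "bitrev k (i div 2) = bitrev k (j div 2)"
      using eq split[of "i mod 2"] split[of "j mod 2"] unfolding bitrev_Suc by metis+
    moreover have "i div 2 \<in> {..<2 ^ k}" "j div 2 \<in> {..<2 ^ k}" using ij by auto
    ultimately show "i = j" using inj_onD[OF Suc.IH] by (metis div_mult_mod_eq)
  qed
qed

lemma sum_S_BR_bitrev:
  assumes "j < 2 ^ k"
  shows "(\<Sum>l<2 ^ k. S_BR k l (bitrev k j) * y l) = y j"
proof -
  have "(\<Sum>l<2 ^ k. S_BR k l (bitrev k j) * y l) = (\<Sum>l<2 ^ k. if l = j then y l else 0)"
    using assms bitrev_less[of k j] inj_onD[OF inj_on_bitrev, of k _ j]
    by (intro sum.cong) (auto simp: S_BR_def)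
  then show ?thesis using assms by simp
qed

lemma kronpow_diag: "m < 2 ^ k \<Longrightarrow> kronpow k m m = 1"
proof (induction k arbitrary: m)
  case 0
  then show ?case by simp
next
  case (Suc k)
  have "m div 2 ^ k < 2" using Suc.prems by (simp add: less_mult_imp_div_less)
  then show ?case using Suc.IH[of "m mod 2 ^ k"] by (simp add: Fker_def)
qed

lemma kronpow_eq_0_if_less: "l < m \<Longrightarrow> kronpow k l m = 0"
proof (induction k arbitrary: l m)
  case 0
  then show ?case by simp
next
  case (Suc k)
  have le: "l div 2 ^ k \<le> m div 2 ^ k" using Suc.prems by (simp add: div_le_mono)
  show ?case
  proof (cases "l div 2 ^ k = m div 2 ^ k")
    case True
    then have "l mod 2 ^ k < m mod 2 ^ k" using Suc.prems
      by (metis div_mult_mod_eq nat_add_left_cancel_less)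
    then show ?thesis using Suc.IH by simp
  next
    case False
    with le show ?thesis by (simp add: Fker_def)
  qed
qed

lemma kronpow_le_1: "kronpow k l m \<le> 1"
  by (induction k arbitrary: l m) (auto simp: Fker_def)

lemma add_mod_cancel:
  fixes a b r q :: nat
  assumes "(a + r) mod q = (b + r) mod q" "a < q" "b < q"
  shows "a = b"
proof -
  have "a' = b'" if "a' \<le> b'" "(a' + r) mod q = (b' + r) mod q" "b' < q" for a' b' :: nat
  proof -
    have "q dvd b' - a'" using that mod_eq_dvd_iff_nat[of "a' + r" "b' + r" q] by simp
    moreover have "b' - a' < q" using that by linarith
    ultimately show ?thesis using that(1) nat_dvd_not_less by fastforce
  qed
  then show ?thesis using assms nat_le_linear by metis
qed

lemma unitriangular_mod_eqD:
  fixes M :: "nat \<Rightarrow> nat \<Rightarrow> nat"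
  assumes diag: "\<And>m. m < n \<Longrightarrow> M m m = 1" and triangular: "\<And>l m. l < m \<Longrightarrow> M l m = 0"
    and eq: "\<And>m. m < n \<Longrightarrow> (\<Sum>l<n. M l m * x l) mod q = (\<Sum>l<n. M l m * x' l) mod q"
    and x: "\<And>l. l < n \<Longrightarrow> x l < q" and x': "\<And>l. l < n \<Longrightarrow> x' l < q"
  shows "m < n \<Longrightarrow> x m = x' m"
proof (induction "n - m" arbitrary: m rule: less_induct)
  case less
  have later: "x l = x' l" if "m < l" "l < n" for l
    using less.hyps[of l] that by auto
  define R where "R = (\<Sum>l\<in>{..<n} - {m}. M l m * x l)"
  have "M l m * x l = M l m * x' l" if "l \<in> {..<n} - {m}" for l
    using that triangular[of l m] later[of l] by (cases "l < m") auto
  then have R': "R = (\<Sum>l\<in>{..<n} - {m}. M l m * x' l)"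
    unfolding R_def by (rule sum.cong[OF refl])
  have "(\<Sum>l<n. M l m * x l) = x m + R"
    unfolding R_def using less.prems diag by (subst sum.remove[of _ m]) auto
  moreover have "(\<Sum>l<n. M l m * x' l) = x' m + R"
    unfolding R' using less.prems diag by (subst sum.remove[of _ m]) auto
  ultimately show ?case using eq[OF less.prems] add_mod_cancel x[OF less.prems] x'[OF less.prems] by metis
qed

lemma mulvec_less: "0 < q \<Longrightarrow> mulvec q n M y j < q"
  by (simp add: mulvec_def)

lemma mulvec_transp_S_BR_bitrev:
  "j < 2 ^ k \<Longrightarrow> mulvec q (2 ^ k) (transp (S_BR k)) y (bitrev k j) = y j mod q"
  using bitrev_less[of k j] by (simp add: mulvec_def transp_def sum_S_BR_bitrev)

lemma Gmat_bitrev: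
  assumes "m < 2 ^ k" "2 \<le> q"
  shows "Gmat q k l (bitrev k m) = (if l < 2 ^ k then kronpow k l m else 0)"
  using assms bitrev_less[of k m] kronpow_le_1[of k l m]
  by (simp add: Gmat_def matmul_def sum_S_BR_bitrev mult.commute[of "kronpow k l _"])

lemma mulvec_transp_Gmat_bitrev:
  "m < 2 ^ k \<Longrightarrow> 2 \<le> q \<Longrightarrow>
    mulvec q (2 ^ k) (transp (Gmat q k)) x (bitrev k m) = (\<Sum>l<2 ^ k. kronpow k l m * x l) mod q"
  using bitrev_less[of k m] by (simp add: mulvec_def transp_def Gmat_bitrev)

lemma inj_on_Tmap:
  assumes q: "2 \<le> q"
  shows "inj_on (Tmap q k) (vecs (2 ^ k) q)"
proof (rule inj_onI)
  fix x x' assume x: "x \<in> vecs (2 ^ k) q" and x': "x' \<in> vecs (2 ^ k) q"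
    and eq: "Tmap q k x = Tmap q k x'"
  define y where "y = mulvec q (2 ^ k) (transp (Gmat q k)) x"
  define y' where "y' = mulvec q (2 ^ k) (transp (Gmat q k)) x'"
  have "y j = y' j" if "j < 2 ^ k" for j
  proof -
    have "y j mod q = y' j mod q"
      using eq mulvec_transp_S_BR_bitrev[OF that, of q] unfolding Tmap_def y_def y'_def by metis
    moreover have "y j < q" "y' j < q" using q unfolding y_def y'_def by (auto intro!: mulvec_less)
    ultimately show ?thesis by simp
  qed
  then have "(\<Sum>l<2 ^ k. kronpow k l m * x l) mod q = (\<Sum>l<2 ^ k. kronpow k l m * x' l) mod q"
    if "m < 2 ^ k" for m
    using bitrev_less[of k m] mulvec_transp_Gmat_bitrev[OF that q] unfolding y_def y'_def by metis
  then have "x m = x' m" if "m < 2 ^ k" for m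
    using unitriangular_mod_eqD[of "2 ^ k" "kronpow k" x q x' m] kronpow_diag kronpow_eq_0_if_less
      x x' that unfolding vecs_def by blast
  moreover have "x m = x' m" if "\<not> m < 2 ^ k" for m
    using x x' that unfolding vecs_def by auto
  ultimately show "x = x'" by blast
qed

lemma Tinv_Tmap: "2 \<le> q \<Longrightarrow> x \<in> vecs (2 ^ k) q \<Longrightarrow> Tinv q k (Tmap q k x) = x"
  unfolding Tinv_def by (rule inv_into_f_f[OF inj_on_Tmap])

section \<open>The decoder errs only at a first wrong frozen coordinate\<close>

lemma sorted_list_of_set_nth_card:
  fixes I :: "nat set"
  assumes "finite I" "i \<in> I"
  shows "card {j \<in> I. j < i} < length (sorted_list_of_set I)"
    and "sorted_list_of_set I ! card {j \<in> I. j < i} = i"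
proof -
  define xs where "xs = sorted_list_of_set I"
  have sorted: "sorted_wrt (<) xs" and set: "set xs = I" and distinct: "distinct xs"
    using assms(1) by (simp_all add: xs_def)
  obtain t where t: "t < length xs" "xs ! t = i"
    using assms(2) set by (metis in_set_conv_nth)
  have less_iff: "xs ! l < i \<longleftrightarrow> l < t" if "l < length xs" for l
    using sorted that t by (metis sorted_wrt_nth_less linorder_neqE_nat order.asym)
  have "j \<in> set (take t xs) \<longleftrightarrow> (\<exists>l<t. xs ! l = j)" for j
    using t(1) by (auto simp: in_set_conv_nth)
  moreover have "j \<in> I \<and> j < i \<longleftrightarrow> (\<exists>l<t. xs ! l = j)" for j
    using less_iff t(1) unfolding set[symmetric] in_set_conv_nth by (metis order.strict_trans)
  ultimately have "{j \<in> I. j < i} = set (take t xs)" by blast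
  then have "card {j \<in> I. j < i} = t"
    using distinct t(1) by (simp add: distinct_card)
  then show "card {j \<in> I. j < i} < length (sorted_list_of_set I)"
    and "sorted_list_of_set I ! card {j \<in> I. j < i} = i"
    using t by (simp_all add: xs_def)
qed

lemma encA_nth_card:
  "i \<in> I1 q p k \<beta> \<Longrightarrow> encA q p k \<beta> x ! card {j \<in> I1 q p k \<beta>. j < i} = Tmap q k x i"
  using sorted_list_of_set_nth_card[of "I1 q p k \<beta>" i] by (simp add: encA_def I1_def)

lemma restr_upd_eq_restr_Suc_iff: "(restr i c)(i := a) = restr (Suc i) c \<longleftrightarrow> a = c i"
  by (auto simp: restr_def fun_eq_iff)

definition cond_fst :: "('a \<times> 'v) pmf \<Rightarrow> 'a pmf \<Rightarrow> 'v \<Rightarrow> 'a pmf" where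
  "cond_fst J d v = (if measure_pmf.prob J {z. snd z = v} = 0 then d
     else map_pmf fst (cond_pmf J {z. snd z = v}))"

lemma condC_eq_cond_fst: "condC q p k d i c y = cond_fst (CiV q p k i) d (restr i c, y)"
  by (simp add: condC_def cond_fst_def)

definition ssc_step_error ::
    "nat \<Rightarrow> (nat \<times> 'y) pmf \<Rightarrow> nat \<Rightarrow> real \<Rightarrow> nat pmf \<Rightarrow> nat \<Rightarrow> (nat \<Rightarrow> nat) \<Rightarrow> (nat \<Rightarrow> 'y) \<Rightarrow> ennreal" where
  "ssc_step_error q p k \<beta> d j x y = (if j \<in> I1 q p k \<beta> then 0
     else emeasure (measure_pmf (cond_fst (CiV q p k j) d (restr j (Tmap q k x), y))) {w. w \<noteq> Tmap q k x j})"

lemma sscdec_error_le_sum_step_errors: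
  "emeasure (measure_pmf (sscdec q p k \<beta> d (encA q p k \<beta> x) y i)) {c. c \<noteq> restr i (Tmap q k x)}
     \<le> (\<Sum>j<i. ssc_step_error q p k \<beta> d j x y)"
proof (induction i)
  case 0
  then show ?case by (simp add: restr_def)
next
  case (Suc i)
  define c where "c = Tmap q k x"
  define step where "step = (\<lambda>a. if i \<in> I1 q p k \<beta>
      then return_pmf (encA q p k \<beta> x ! card {j \<in> I1 q p k \<beta>. j < i}) else condC q p k d i a y)"
  define wrong where "wrong = {a. a \<noteq> restr i c}"
  define e where "e = ssc_step_error q p k \<beta> d i x y"
  have step_error: "emeasure (measure_pmf (map_pmf (\<lambda>a'. a(i := a')) (step a))) {c'. c' \<noteq> restr (Suc i) c}
      \<le> indicator wrong a + e" for a
  proof (cases "a = restr i c")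
    case True
    then have "(\<lambda>a'. a(i := a')) -` {c'. c' \<noteq> restr (Suc i) c} = {w. w \<noteq> c i}"
      using restr_upd_eq_restr_Suc_iff[of i c] by auto
    moreover have "restr i a = restr i c" using True by (auto simp: restr_def)
    ultimately show ?thesis
      by (simp add: step_def e_def ssc_step_error_def c_def encA_nth_card condC_eq_cond_fst)
  next
    case False
    then have "indicator wrong a = (1::ennreal)" by (simp add: wrong_def)
    then show ?thesis
      using measure_pmf.emeasure_le_1 by (metis add_increasing2 zero_le)
  qed
  let ?prefix = "sscdec q p k \<beta> d (encA q p k \<beta> x) y i"
  have "emeasure (measure_pmf (sscdec q p k \<beta> d (encA q p k \<beta> x) y (Suc i))) {c'. c' \<noteq> restr (Suc i) c}
      = (\<integral>\<^sup>+a. emeasure (measure_pmf (map_pmf (\<lambda>a'. a(i := a')) (step a))) {c'. c' \<noteq> restr (Suc i) c}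
            \<partial>measure_pmf ?prefix)"
    by (simp add: step_def emeasure_bind_pmf del: emeasure_map_pmf)
  also have "\<dots> \<le> (\<integral>\<^sup>+a. indicator wrong a + e \<partial>measure_pmf ?prefix)"
    by (intro nn_integral_mono step_error)
  also have "\<dots> = emeasure (measure_pmf ?prefix) wrong + e"
    by (subst nn_integral_add) (auto simp: measure_pmf.emeasure_space_1)
  also have "\<dots> \<le> (\<Sum>j<Suc i. ssc_step_error q p k \<beta> d j x y)"
    using Suc.IH by (simp add: wrong_def c_def e_def add_right_mono)
  finally show ?case by (simp add: c_def)
qed

section \<open>Sampling from the posterior errs with probability at most (q - 1) Z\<close>

lemma nn_integral_count_space_fst_slice:
  "(\<integral>\<^sup>+z. (if fst z = u then F (snd z) else 0) \<partial>count_space UNIV) = (\<integral>\<^sup>+v. F v \<partial>count_space UNIV)"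
proof -
  have "(\<integral>\<^sup>+z. (if fst z = u then F (snd z) else 0) \<partial>count_space UNIV)
      = (\<integral>\<^sup>+z. F (snd z) * indicator (range (Pair u)) z \<partial>count_space UNIV)"
    by (intro nn_integral_cong) (auto simp: indicator_def image_iff)
  also have "\<dots> = (\<integral>\<^sup>+z. F (snd z) \<partial>count_space (range (Pair u)))"
    by (subst nn_integral_count_space_indicator) auto
  also have "\<dots> = (\<integral>\<^sup>+v. F (snd (Pair u v)) \<partial>count_space UNIV)"
    by (rule nn_integral_bij_count_space[symmetric]) (auto simp: bij_betw_def inj_on_def)
  finally show ?thesis by simp
qed

lemma nn_integral_pmf_fst_slice_le_1: "(\<integral>\<^sup>+v. ennreal (pmf J (u, v)) \<partial>count_space UNIV) \<le> 1"
proof -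
  have "(\<integral>\<^sup>+v. ennreal (pmf J (u, v)) \<partial>count_space UNIV)
     = (\<integral>\<^sup>+z. (if fst z = u then ennreal (pmf J (u, snd z)) else 0) \<partial>count_space UNIV)"
    by (rule nn_integral_count_space_fst_slice[symmetric])
  also have "\<dots> \<le> (\<integral>\<^sup>+z. ennreal (pmf J z) \<partial>count_space UNIV)"
    by (intro nn_integral_mono) (auto simp: prod_eq_iff)
  also have "\<dots> = 1" by (simp add: nn_integral_pmf measure_pmf.emeasure_space_1[simplified])
  finally show ?thesis .
qed

lemma nn_integral_sqrt_pmf_eq_infsum:
  "(\<integral>\<^sup>+v. ennreal (sqrt (pmf J (u, v) * pmf J (u', v))) \<partial>count_space UNIV)
    = ennreal (infsum (\<lambda>v. sqrt (pmf J (u, v) * pmf J (u', v))) UNIV)"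
proof -
  define F where "F = (\<lambda>v. sqrt (pmf J (u, v) * pmf J (u', v)))"
  have "F v \<le> pmf J (u, v) + pmf J (u', v)" for v
  proof -
    have "F v \<le> (pmf J (u, v) + pmf J (u', v)) / 2"
      unfolding F_def by (rule arith_geo_mean_sqrt) simp_all
    also have "\<dots> \<le> pmf J (u, v) + pmf J (u', v)" by simp
    finally show ?thesis .
  qed
  then have "(\<integral>\<^sup>+v. ennreal (F v) \<partial>count_space UNIV)
      \<le> (\<integral>\<^sup>+v. ennreal (pmf J (u, v)) + ennreal (pmf J (u', v)) \<partial>count_space UNIV)"
    by (intro nn_integral_mono) (simp flip: ennreal_plus)
  also have "\<dots> = (\<integral>\<^sup>+v. ennreal (pmf J (u, v)) \<partial>count_space UNIV)
      + (\<integral>\<^sup>+v. ennreal (pmf J (u', v)) \<partial>count_space UNIV)"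
    by (rule nn_integral_add) auto
  also have "\<dots> \<le> 1 + 1"
    by (intro add_mono nn_integral_pmf_fst_slice_le_1)
  finally have "(\<integral>\<^sup>+v. ennreal (F v) \<partial>count_space UNIV) < \<infinity>"
    by (rule order.strict_trans1) simp
  then have "integrable (count_space UNIV) F"
    by (intro integrableI_nonneg) (auto simp: F_def)
  then have summable: "Infinite_Set_Sum.abs_summable_on F UNIV"
    by (simp add: Infinite_Set_Sum.abs_summable_on_def)
  have "(\<integral>\<^sup>+v. ennreal (F v) \<partial>count_space UNIV) = ennreal (infsetsum F UNIV)"
    using nn_integral_conv_infsetsum[OF summable] by (simp add: F_def)
  also have "infsetsum F UNIV = infsum F UNIV" by (rule infsetsum_infsum[OF summable])
  finally show ?thesis by (simp add: F_def)
qed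

lemma mult_div_le_sqrt_mult:
  fixes a b P :: real
  assumes "0 \<le> a" "a \<le> P" "0 \<le> b" "b \<le> P" "0 < P"
  shows "a * b / P \<le> sqrt (a * b)"
proof -
  define s where "s = sqrt (a * b)"
  have "0 \<le> s" and ab: "a * b = s * s" using assms by (simp_all add: s_def)
  have "a * b \<le> P * P" using assms by (intro mult_mono) simp_all
  then have "s \<le> P" using assms(5) real_sqrt_le_mono[of "a * b" "P * P"] by (simp add: s_def)
  then have "s * s \<le> s * P" using \<open>0 \<le> s\<close> by (rule mult_left_mono)
  then show ?thesis using assms(5) \<open>0 \<le> s\<close> by (simp add: ab s_def[symmetric] pos_divide_le_eq)
qed

lemma emeasure_cond_fst_neq:
  fixes J :: "(nat \<times> 'v) pmf"
  assumes supp: "\<And>z. z \<in> set_pmf J \<Longrightarrow> fst z < q"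
    and pos: "measure_pmf.prob J {z. snd z = v} \<noteq> 0"
  shows "emeasure (measure_pmf (cond_fst J d v)) {w. w \<noteq> u}
    = ennreal ((\<Sum>u'\<in>{..<q} - {u}. pmf J (u', v)) / measure_pmf.prob J {z. snd z = v})"
proof -
  define E where "E = {z::nat \<times> 'v. snd z = v}"
  define wrong where "wrong = (\<lambda>u'. (u', v)) ` ({..<q} - {u})"
  have "E \<inter> {z. fst z \<noteq> u} \<inter> set_pmf J = wrong \<inter> set_pmf J"
  proof (intro equalityI subsetI)
    fix z assume z: "z \<in> E \<inter> {z. fst z \<noteq> u} \<inter> set_pmf J"
    then have "z = (fst z, v)" "fst z \<in> {..<q} - {u}" using supp[of z] by (auto simp: E_def)
    then show "z \<in> wrong \<inter> set_pmf J" using z unfolding wrong_def by (metis IntD2 IntI imageI)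
  qed (auto simp: E_def wrong_def)
  then have "measure_pmf.prob J (E \<inter> {z. fst z \<noteq> u}) = measure_pmf.prob J wrong"
    by (metis measure_Int_set_pmf)
  also have "\<dots> = (\<Sum>u'\<in>{..<q} - {u}. pmf J (u', v))"
    unfolding wrong_def by (subst measure_measure_pmf_finite) (auto simp: sum.reindex inj_on_def)
  finally have wrong_prob: "measure_pmf.prob J (E \<inter> {z. fst z \<noteq> u}) = (\<Sum>u'\<in>{..<q} - {u}. pmf J (u', v))" .
  have "set_pmf J \<inter> E \<noteq> {}" using pos by (simp add: E_def measure_pmf_zero_iff)
  then have "emeasure (measure_pmf (cond_fst J d v)) {w. w \<noteq> u}
      = emeasure (measure_pmf J) (E \<inter> {z. fst z \<noteq> u}) / emeasure (measure_pmf J) E"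
    using pos by (simp add: cond_fst_def E_def[symmetric] vimage_def cond_pmf.rep_eq)
  moreover have "0 < measure_pmf.prob J E" using pos by (simp add: E_def zero_less_measure_iff)
  ultimately show ?thesis
    using wrong_prob by (simp add: measure_pmf.emeasure_eq_measure E_def divide_ennreal sum_nonneg)
qed

lemma pmf_mult_cond_fst_error_le:
  fixes J :: "(nat \<times> 'v) pmf"
  assumes supp: "\<And>z. z \<in> set_pmf J \<Longrightarrow> fst z < q"
  shows "ennreal (pmf J (u, v)) * emeasure (measure_pmf (cond_fst J d v)) {w. w \<noteq> u}
    \<le> ennreal (\<Sum>u'\<in>{..<q} - {u}. sqrt (pmf J (u, v) * pmf J (u', v)))"
proof (cases "pmf J (u, v) = 0")
  case True
  then show ?thesis by simp
next
  case False
  define P where "P = measure_pmf.prob J {z. snd z = v}"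
  have le_P: "pmf J (u', v) \<le> P" for u'
    using measure_pmf.finite_measure_mono[of "{(u', v)}" "{z. snd z = v}" J]
    by (simp add: measure_pmf_single P_def)
  have P_pos: "0 < P"
    unfolding P_def using False by (intro measure_pmf_posI) (auto simp: set_pmf_iff)
  have "ennreal (pmf J (u, v)) * emeasure (measure_pmf (cond_fst J d v)) {w. w \<noteq> u}
      = ennreal (pmf J (u, v) * ((\<Sum>u'\<in>{..<q} - {u}. pmf J (u', v)) / P))"
    using emeasure_cond_fst_neq[where J = J and q = q and v = v and d = d and u = u, OF supp] P_pos
    by (subst ennreal_mult'') (auto simp: P_def sum_nonneg)
  also have "pmf J (u, v) * ((\<Sum>u'\<in>{..<q} - {u}. pmf J (u', v)) / P)
      = (\<Sum>u'\<in>{..<q} - {u}. pmf J (u, v) * pmf J (u', v) / P)"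
    by (simp add: sum_distrib_left sum_divide_distrib)
  also have "\<dots> \<le> (\<Sum>u'\<in>{..<q} - {u}. sqrt (pmf J (u, v) * pmf J (u', v)))"
    using le_P P_pos by (intro sum_mono mult_div_le_sqrt_mult) auto
  finally show ?thesis by (simp add: ennreal_leI)
qed

lemma cond_fst_error_le_Zbhat:
  fixes J :: "(nat \<times> 'v) pmf"
  assumes q: "2 \<le> q" and supp: "\<And>z. z \<in> set_pmf J \<Longrightarrow> fst z < q"
  shows "(\<integral>\<^sup>+z. emeasure (measure_pmf (cond_fst J d (snd z))) {w. w \<noteq> fst z} \<partial>measure_pmf J)
    \<le> ennreal ((real q - 1) * Zbhat q J)"
proof -
  define err where "err = (\<lambda>z. emeasure (measure_pmf (cond_fst J d (snd z))) {w. w \<noteq> fst z})"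
  define B where "B = (\<lambda>u u' v. sqrt (pmf J (u, v) * pmf J (u', v)))"
  have pointwise: "ennreal (pmf J z) * err z
      \<le> (\<Sum>u<q. \<Sum>u'\<in>{..<q} - {u}. if fst z = u then ennreal (B u u' (snd z)) else 0)" for z
  proof (cases "fst z < q")
    case True
    have "(\<Sum>u<q. \<Sum>u'\<in>{..<q} - {u}. if fst z = u then ennreal (B u u' (snd z)) else 0)
        = (\<Sum>u<q. if fst z = u then (\<Sum>u'\<in>{..<q} - {u}. ennreal (B u u' (snd z))) else 0)"
      by (intro sum.cong) auto
    also have "\<dots> = ennreal (\<Sum>u'\<in>{..<q} - {fst z}. B (fst z) u' (snd z))"
      using True by (simp add: B_def)
    finally show ?thesis
      using pmf_mult_cond_fst_error_le[where J = J and q = q and u = "fst z" and v = "snd z" and d = d, OF supp] by (simp add: err_def B_def)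
  next
    case False
    then have "pmf J z = 0" using supp by (meson set_pmf_iff)
    then show ?thesis by simp
  qed
  have "(\<integral>\<^sup>+z. err z \<partial>measure_pmf J) = (\<integral>\<^sup>+z. ennreal (pmf J z) * err z \<partial>count_space UNIV)"
    by (rule nn_integral_measure_pmf)
  also have "\<dots> \<le> (\<integral>\<^sup>+z. (\<Sum>u<q. \<Sum>u'\<in>{..<q} - {u}. if fst z = u then ennreal (B u u' (snd z)) else 0)
      \<partial>count_space UNIV)"
    by (intro nn_integral_mono pointwise)
  also have "\<dots> = (\<Sum>u<q. \<Sum>u'\<in>{..<q} - {u}.
      \<integral>\<^sup>+z. (if fst z = u then ennreal (B u u' (snd z)) else 0) \<partial>count_space UNIV)"
    by (subst nn_integral_sum) (auto intro!: sum.cong nn_integral_sum)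
  also have "\<dots> = (\<Sum>u<q. \<Sum>u'\<in>{..<q} - {u}. \<integral>\<^sup>+v. ennreal (B u u' v) \<partial>count_space UNIV)"
    by (intro sum.cong refl) (rule nn_integral_count_space_fst_slice)
  also have "\<dots> = (\<Sum>u<q. \<Sum>u'\<in>{..<q} - {u}. ennreal (infsum (B u u') UNIV))"
    unfolding B_def by (simp add: nn_integral_sqrt_pmf_eq_infsum)
  also have "\<dots> = ennreal ((real q - 1) * Zbhat q J)"
    using q by (simp add: Zbhat_def B_def infsum_nonneg sum_nonneg)
  finally show ?thesis unfolding err_def .
qed

section \<open>The error bound\<close>

lemma CiV_fst_less: "0 < q \<Longrightarrow> z \<in> set_pmf (CiV q p k j) \<Longrightarrow> fst z < q"
  by (auto simp: CiV_def Tmap_def mulvec_less Let_def)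

lemma nn_integral_ssc_step_error_le:
  fixes p :: "(nat \<times> 'y) pmf"
  assumes q: "2 \<le> q" and j: "j < 2 ^ k"
  shows "(\<integral>\<^sup>+xy. ssc_step_error q p k \<beta> d j (fst xy) (snd xy) \<partial>measure_pmf (XYn p (2 ^ k)))
    \<le> ennreal ((real q - 1) * 2 powr - (real (2 ^ k) powr \<beta>))"
proof (cases "j \<in> I1 q p k \<beta>")
  case True
  then show ?thesis by (simp add: ssc_step_error_def)
next
  case False
  define J where "J = CiV q p k j"
  define g where "g = (\<lambda>(x, y::nat \<Rightarrow> 'y). let c = Tmap q k x in (c j, (restr j c, y)))"
  have J: "J = map_pmf g (XYn p (2 ^ k))" by (simp add: J_def g_def CiV_def)
  have "ssc_step_error q p k \<beta> d j (fst xy) (snd xy)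
      = emeasure (measure_pmf (cond_fst J d (snd (g xy)))) {w. w \<noteq> fst (g xy)}" for xy
    using False by (cases xy) (simp add: ssc_step_error_def g_def J_def Let_def)
  then have "(\<integral>\<^sup>+xy. ssc_step_error q p k \<beta> d j (fst xy) (snd xy) \<partial>measure_pmf (XYn p (2 ^ k)))
      = (\<integral>\<^sup>+z. emeasure (measure_pmf (cond_fst J d (snd z))) {w. w \<noteq> fst z} \<partial>measure_pmf J)"
    by (simp add: J)
  also have "\<dots> \<le> ennreal ((real q - 1) * Zbhat q J)"
  proof (rule cond_fst_error_le_Zbhat[OF q])
    show "fst z < q" if "z \<in> set_pmf J" for z
      using CiV_fst_less[of q z] that q unfolding J_def by simp
  qed
  also have "\<dots> \<le> ennreal ((real q - 1) * 2 powr - (real (2 ^ k) powr \<beta>))"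
  proof -
    have "j \<in> I0 q p k \<beta>" using False j by (simp add: I1_def)
    then have "Zbhat q J \<le> 2 powr - (real (2 ^ k) powr \<beta>)" by (simp add: I0_def J_def)
    then show ?thesis using q by (intro ennreal_leI mult_left_mono) simp_all
  qed
  finally show ?thesis .
qed

lemma restr_Tmap: "restr (2 ^ k) (Tmap q k x) = Tmap q k x"
  by (auto simp: restr_def Tmap_def mulvec_def)

lemma XYn_vecs:
  assumes "fst ` set_pmf p \<subseteq> {..<q}" "xy \<in> set_pmf (XYn p n)"
  shows "fst xy \<in> vecs n q"
proof -
  obtain f where f: "f \<in> set_pmf (Pi_pmf {..<n} undefined (\<lambda>_. p))"
    and xy: "xy = (\<lambda>i. if i < n then fst (f i) else 0, \<lambda>i. snd (f i))"
    using assms(2) by (auto simp: XYn_def)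
  have "f i \<in> set_pmf p" if "i < n" for i
    using f that by (simp add: set_Pi_pmf PiE_dflt_def)
  then show ?thesis using assms(1) by (auto simp: xy vecs_def)
qed

lemma decoder_error_le_sum_step_errors:
  fixes p :: "(nat \<times> 'y) pmf"
  assumes q: "2 \<le> q" and supp: "fst ` set_pmf p \<subseteq> {..<q}" and xy: "(x, y) \<in> set_pmf (XYn p (2 ^ k))"
  shows "emeasure (measure_pmf (Psi q p k \<beta> d (encA q p k \<beta> x) y)) {xh. xh \<noteq> x}
    \<le> (\<Sum>j<2 ^ k. ssc_step_error q p k \<beta> d j x y)"
proof -
  have "x \<in> vecs (2 ^ k) q" using XYn_vecs[OF supp xy] by simp
  then have "emeasure (measure_pmf (Psi q p k \<beta> d (encA q p k \<beta> x) y)) {xh. xh \<noteq> x}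
      \<le> emeasure (measure_pmf (sscdec q p k \<beta> d (encA q p k \<beta> x) y (2 ^ k)))
          {c. c \<noteq> restr (2 ^ k) (Tmap q k x)}"
    by (auto simp: Psi_def vimage_def restr_Tmap Tinv_Tmap[OF q] intro!: emeasure_mono)
  also have "\<dots> \<le> (\<Sum>j<2 ^ k. ssc_step_error q p k \<beta> d j x y)"
    by (rule sscdec_error_le_sum_step_errors)
  finally show ?thesis .
qed

lemma Perr_le:
  fixes p :: "(nat \<times> 'y) pmf"
  assumes q: "2 \<le> q" and supp: "fst ` set_pmf p \<subseteq> {..<q}"
  shows "Perr q p k \<beta> d \<le> real (2 ^ k) * ((real q - 1) * 2 powr - (real (2 ^ k) powr \<beta>))"
proof -
  define D where "D = XYn p (2 ^ k)"
  define bound where "bound = (real q - 1) * 2 powr - (real (2 ^ k) powr \<beta>)"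
  have "0 \<le> bound" using q by (simp add: bound_def)
  define Err where "Err = {(x, xh). xh \<noteq> (x :: nat \<Rightarrow> nat)}"
  define decode where "decode = (\<lambda>(x, y). map_pmf (\<lambda>xh. (x, xh)) (Psi q p k \<beta> d (encA q p k \<beta> x) y))"
  have "ennreal (Perr q p k \<beta> d) = emeasure (measure_pmf (bind_pmf D decode)) Err"
    by (simp add: Perr_def D_def Err_def decode_def measure_pmf.emeasure_eq_measure)
  also have "\<dots> = (\<integral>\<^sup>+xy. emeasure (measure_pmf (decode xy)) Err \<partial>measure_pmf D)"
    by (rule emeasure_bind_pmf)
  also have "\<dots> = (\<integral>\<^sup>+xy. emeasure (measure_pmf (Psi q p k \<beta> d (encA q p k \<beta> (fst xy)) (snd xy)))
      {xh. xh \<noteq> fst xy} \<partial>measure_pmf D)"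
    by (intro nn_integral_cong) (auto simp: decode_def Err_def vimage_def split: prod.splits)
  also have "\<dots> \<le> (\<integral>\<^sup>+xy. (\<Sum>j<2 ^ k. ssc_step_error q p k \<beta> d j (fst xy) (snd xy)) \<partial>measure_pmf D)"
    using decoder_error_le_sum_step_errors[OF q supp] by (intro nn_integral_mono_AE AE_pmfI) (auto simp: D_def)
  also have "\<dots> = (\<Sum>j<2 ^ k. \<integral>\<^sup>+xy. ssc_step_error q p k \<beta> d j (fst xy) (snd xy) \<partial>measure_pmf D)"
    by (rule nn_integral_sum) simp
  also have "\<dots> \<le> (\<Sum>j<(2::nat) ^ k. ennreal bound)"
    unfolding D_def bound_def by (intro sum_mono nn_integral_ssc_step_error_le[OF q]) simp
  also have "\<dots> = ennreal (real (2 ^ k) * bound)"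
    using \<open>0 \<le> bound\<close> by (simp add: ennreal_mult'' ennreal_power[symmetric])
  finally show ?thesis using \<open>0 \<le> bound\<close> by (simp add: bound_def ennreal_le_iff)
qed

lemma tendsto_pow2_mult_2_powr_neg_powr:
  assumes "0 < \<beta>"
  shows "(\<lambda>k. real (2 ^ k) * 2 powr - (real (2 ^ k) powr \<beta>)) \<longlonglongrightarrow> 0"
proof -
  have "((\<lambda>x::real. x * 2 powr - (x powr \<beta>)) \<longlongrightarrow> 0) at_top"
    using assms by real_asymp
  moreover have "filterlim (\<lambda>k::nat. real (2 ^ k)) at_top sequentially"
    by (rule filterlim_at_top_mono[OF filterlim_real_sequentially]) (simp add: less_imp_le)
  ultimately show ?thesis by (rule filterlim_compose)
qed

theorem theorem4:
  fixes q :: nat and p :: "(nat \<times> 'y) pmf" and \<beta> :: real and d :: "nat pmf"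
  assumes "prime q"
    and "fst ` set_pmf p \<subseteq> {..<q}"
    and "0 < \<beta>" and "\<beta> < 1 / 2"
  shows "(\<forall>k \<ge> 1. Perr q p k \<beta> d
            \<le> (real q - 1) / log (real q) 2 * real (2 ^ k) * 2 powr (- (real (2 ^ k) powr \<beta>)))
       \<and> (\<lambda>k. Perr q p k \<beta> d) \<longlonglongrightarrow> 0"
proof -
  have q: "2 \<le> q" using assms(1) by (simp add: prime_ge_2_nat)
  define C where "C = (real q - 1) / log (real q) 2"
  have "0 < log (real q) 2" "log (real q) 2 \<le> 1" using q by simp_all
  then have "real q - 1 \<le> C" using q by (simp add: C_def le_divide_eq mult_left_le)
  have bound: "Perr q p k \<beta> d \<le> C * (real (2 ^ k) * 2 powr - (real (2 ^ k) powr \<beta>))" for k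
  proof -
    have "Perr q p k \<beta> d \<le> (real q - 1) * (real (2 ^ k) * 2 powr - (real (2 ^ k) powr \<beta>))"
      using Perr_le[OF q assms(2), of k \<beta> d] by (simp add: mult.left_commute)
    also have "\<dots> \<le> C * (real (2 ^ k) * 2 powr - (real (2 ^ k) powr \<beta>))"
      using \<open>real q - 1 \<le> C\<close> by (intro mult_right_mono) simp_all
    finally show ?thesis .
  qed
  have "(\<lambda>k. Perr q p k \<beta> d) \<longlonglongrightarrow> 0"
  proof (rule tendsto_sandwich[OF _ _ tendsto_const])
    show "\<forall>\<^sub>F k in sequentially. 0 \<le> Perr q p k \<beta> d" by (simp add: Perr_def)
    show "\<forall>\<^sub>F k in sequentially. Perr q p k \<beta> d \<le> C * (real (2 ^ k) * 2 powr - (real (2 ^ k) powr \<beta>))"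
      using bound by simp
    show "(\<lambda>k. C * (real (2 ^ k) * 2 powr - (real (2 ^ k) powr \<beta>))) \<longlonglongrightarrow> 0"
      using tendsto_mult_right_zero[OF tendsto_pow2_mult_2_powr_neg_powr[OF assms(3)]] by simp
  qed
  with bound show ?thesis by (simp add: C_def mult.assoc)
qed

end
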